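(* Let $d \geq 3$ and let $P$ be the Markov kernel on $\mathbb{S}^{d-1}\times\mathcal{B}(\mathbb{S}^{d-1})$ given by \[ P(x,A) = \frac{1}{2\pi\,\sigma^{(x)}_{d-2}(\mathbb{S}^{d-2}_x)} \int_{\mathbb{S}^{d-2}_x} \int_0^{2\pi} \mathbb{1}_A\big(\cos(\omega)x + \sin(\omega) z\big)\, \mathrm{d}\omega\, \sigma^{(x)}_{d-2}(\mathrm{d}z). \] Then $P$ is Wasserstein contractive with rate $\rho = 7/8$, i.e. $\mathsf{Dob}(P)\le 7/8$.
   Context: $\mathbb{S}^{d-1} = \{x\in\mathbb{R}^d:\|x\|=1\}$ with Euclidean norm $\|\cdot\|$ and Borel $\sigma$-algebra. For $x\in\mathbb{S}^{d-1}$, $\mathbb{S}^{d-2}_x := \{z\in\mathbb{S}^{d-1}: x^Tz=0\}$ with natural surface measure $\sigma^{(x)}_{d-2}$. $P$ is the transition kernel of geodesic slice sampling on the sphere for a constant target density. $\mathcal{W}$ is the Wasserstein-1 distance w.r.t. the Euclidean distance restricted to the sphere, $\mathsf{Dob}(P) := \sup_{x\neq y}\mathcal{W}(P(x,\cdot),P(y,\cdot))/\|x-y\|$, and $P$ is Wasserstein contractive with rate $\rho$ if $\mathsf{Dob}(P)\le\rho<1$. *)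

theory Defs
  imports "HOL-Probability.Probability"
begin

definition usphere :: "'a::euclidean_space set" where
  "usphere = {x. norm x = 1}"

definition sph_space :: "'a::euclidean_space measure" where
  "sph_space = restrict_space borel usphere"

definition subsphere :: "'a::euclidean_space \<Rightarrow> 'a set" where
  "subsphere x = {z. norm z = 1 \<and> inner x z = 0}"

text \<open>Natural surface measure on S^{d-2}_x, via the cone-measure formula
  sigma(B) = (d-1) * lambda_{d-1}({t z. z in B, 0 < t <= 1}) where lambda_{d-1} is
  the (d-1)-dimensional Lebesgue measure on the hyperplane x^perp.  The latter is
  expressed as the d-dimensional Lebesgue measure of the cylinder of height 1
  in direction x (x a unit normal of the hyperplane).\<close>
definition cone_cyl :: "'a::euclidean_space \<Rightarrow> 'a set \<Rightarrow> 'a set" where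
  "cone_cyl x B = {t *\<^sub>R z + s *\<^sub>R x | z t s. z \<in> B \<and> 0 < t \<and> t \<le> 1 \<and> 0 \<le> s \<and> s \<le> 1}"

definition sub_surface :: "'a::euclidean_space \<Rightarrow> 'a measure" where
  "sub_surface x = measure_of (subsphere x) (sets (restrict_space borel (subsphere x)))
     (\<lambda>B. of_nat (DIM('a) - 1) * emeasure lborel (cone_cyl x B))"

definition gss_kernel :: "'a::euclidean_space \<Rightarrow> 'a set \<Rightarrow> ennreal" where
  "gss_kernel x A =
     (\<integral>\<^sup>+ z. (\<integral>\<^sup>+ \<omega>. indicator {0..2*pi} \<omega> * indicator A (cos \<omega> *\<^sub>R x + sin \<omega> *\<^sub>R z) \<partial>lborel)
        \<partial>sub_surface x)
     / (ennreal (2 * pi) * emeasure (sub_surface x) (subsphere x))"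

definition gss_P :: "'a::euclidean_space \<Rightarrow> 'a measure" where
  "gss_P x = measure_of usphere (sets sph_space) (gss_kernel x)"

definition coupling :: "'a::euclidean_space measure \<Rightarrow> 'a measure \<Rightarrow> ('a \<times> 'a) measure \<Rightarrow> bool" where
  "coupling \<mu> \<nu> \<gamma> \<longleftrightarrow> sets \<gamma> = sets (sph_space \<Otimes>\<^sub>M sph_space) \<and> prob_space \<gamma> \<and>
     distr \<gamma> sph_space fst = \<mu> \<and> distr \<gamma> sph_space snd = \<nu>"

definition wasserstein1 :: "'a::euclidean_space measure \<Rightarrow> 'a measure \<Rightarrow> ennreal" where
  "wasserstein1 \<mu> \<nu> = (INF \<gamma> \<in> {\<gamma>. coupling \<mu> \<nu> \<gamma>}. \<integral>\<^sup>+ p. ennreal (dist (fst p) (snd p)) \<partial>\<gamma>)"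

definition Dob :: "('a::euclidean_space \<Rightarrow> 'a measure) \<Rightarrow> ennreal" where
  "Dob P = (SUP p \<in> {(x, y). x \<in> usphere \<and> y \<in> usphere \<and> x \<noteq> y}.
              wasserstein1 (P (fst p)) (P (snd p)) / ennreal (dist (fst p) (snd p)))"

end

theory Submission
  imports Defs
begin

text \<open>
  Couple \<open>P(x,\<cdot>)\<close> and \<open>P(y,\<cdot>)\<close> by letting both samplers use the same angle \<open>\<omega>\<close>, and
  directions \<open>z\<close> and \<open>R z\<close>, where \<open>R\<close> is the rotation in the plane of \<open>x\<close> and \<open>y\<close> taking
  \<open>x\<close> to \<open>y\<close>; \<open>R z\<close> is again uniform on the great subsphere of \<open>y\<close>, because the surface
  measure, being a cone measure, inherits the rotation invariance of Lebesgue measure.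
  If \<open>e\<close> completes \<open>x\<close> to an orthonormal basis of that plane, the two proposals lie at
  distance \<open>|x - y| sqrt (cos\<^sup>2 \<omega> + (e \<bullet> z)\<^sup>2 sin\<^sup>2 \<omega>)\<close>. Bounding the square root by its
  tangent at \<open>7/8\<close>, integrating over \<open>\<omega>\<close>, and using that \<open>(e \<bullet> z)\<^sup>2\<close> has mean at most
  \<open>1/2\<close> on the subsphere when \<open>d \<ge> 3\<close>, the expected distance is at most
  \<open>97/112 |x - y| \<le> 7/8 |x - y|\<close>.
\<close>

section \<open>Invariance of Lebesgue measure under orthogonal transformations\<close>

text \<open>
  The library proves this only on \<open>real ^ 'n\<close> with a well-ordered index type, so we transport
  it along the coordinates with respect to \<^const>\<open>Basis\<close>.
\<close>

typedef (overloaded) ('a::euclidean_space) basis_index = "Basis :: 'a set"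
  using nonempty_Basis by blast

lemma bij_betw_Rep_basis_index: "bij_betw Rep_basis_index UNIV (Basis :: 'a::euclidean_space set)"
  by (metis bij_betw_def inj_on_def Rep_basis_index_inject type_definition.Rep_range type_definition_basis_index)

instance basis_index :: (euclidean_space) finite
  by standard (metis bij_betw_Rep_basis_index bij_betw_finite finite_Basis)

instantiation basis_index :: (euclidean_space) wellorder
begin

definition less_eq_basis_index :: "'a basis_index \<Rightarrow> 'a basis_index \<Rightarrow> bool" where
  "less_eq_basis_index i j \<longleftrightarrow> to_nat i \<le> to_nat j"

definition less_basis_index :: "'a basis_index \<Rightarrow> 'a basis_index \<Rightarrow> bool" where
  "less_basis_index i j \<longleftrightarrow> to_nat i < to_nat j"

instance
proof
  fix P :: "'a basis_index \<Rightarrow> bool" and a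
  assume IH: "\<And>x. (\<And>y. y < x \<Longrightarrow> P y) \<Longrightarrow> P x"
  have "\<forall>x. to_nat x = n \<longrightarrow> P x" for n
    by (induction n rule: less_induct) (metis IH less_basis_index_def)
  then show "P a" by blast
qed (auto simp: less_eq_basis_index_def less_basis_index_def)

end

definition coords :: "'a::euclidean_space \<Rightarrow> real ^ 'a basis_index" where
  "coords v = (\<chi> i. v \<bullet> Rep_basis_index i)"

definition of_coords :: "real ^ 'a basis_index \<Rightarrow> 'a::euclidean_space" where
  "of_coords w = (\<Sum>i\<in>UNIV. w $ i *\<^sub>R Rep_basis_index i)"

lemma coords_nth [simp]: "coords v $ i = v \<bullet> Rep_basis_index i"
  by (simp add: coords_def)

lemma sum_basis_index: "(\<Sum>i\<in>UNIV. f (Rep_basis_index i)) = (\<Sum>b\<in>(Basis :: 'a::euclidean_space set). f b)"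
  using sum.reindex_bij_betw[OF bij_betw_Rep_basis_index] by blast

lemma prod_basis_index: "(\<Prod>i\<in>UNIV. f (Rep_basis_index i)) = (\<Prod>b\<in>(Basis :: 'a::euclidean_space set). f b)"
  using prod.reindex_bij_betw[OF bij_betw_Rep_basis_index] by blast

lemma prod_Basis_vec: "(\<Prod>b\<in>(Basis :: (real ^ 'n) set). f b) = (\<Prod>i\<in>UNIV. f (axis i 1))"
proof -
  have "(Basis :: (real ^ 'n) set) = (\<lambda>i. axis i 1) ` UNIV"
    by (auto simp: Basis_vec_def)
  moreover have "inj (\<lambda>i::'n. axis i (1::real))"
    by (auto simp: inj_on_def axis_eq_axis)
  ultimately show ?thesis
    using prod.reindex[of "\<lambda>i::'n. axis i (1::real)" UNIV f] by (simp add: o_def)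
qed

lemma of_coords_coords [simp]: "of_coords (coords v) = v"
  using sum_basis_index[of "\<lambda>b. (v \<bullet> b) *\<^sub>R b"]
  by (simp add: of_coords_def euclidean_representation)

lemma inner_of_coords_Rep [simp]: "of_coords w \<bullet> Rep_basis_index j = w $ j"
proof -
  have "of_coords w \<bullet> Rep_basis_index j = (\<Sum>i\<in>UNIV. if i = j then w $ i else 0)"
    unfolding of_coords_def inner_sum_left
    by (intro sum.cong refl) (auto simp: inner_Basis Rep_basis_index Rep_basis_index_inject)
  then show ?thesis by simp
qed

lemma coords_of_coords [simp]: "coords (of_coords w) = w"
  by (simp add: vec_eq_iff)

lemma linear_coords: "linear coords"
  by (rule linearI) (auto simp: vec_eq_iff inner_add_left)

lemma linear_of_coords: "linear of_coords"
  by (rule linearI) (simp_all add: of_coords_def scaleR_add_left sum.distrib scaleR_sum_right)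

lemma inner_coords: "coords v \<bullet> coords w = v \<bullet> w"
  using sum_basis_index[of "\<lambda>b. (v \<bullet> b) * (w \<bullet> b)"]
  by (simp add: inner_vec_def euclidean_inner[of v w])

lemma inner_of_coords: "of_coords v \<bullet> of_coords w = v \<bullet> w"
  by (metis inner_coords coords_of_coords)

lemma borel_measurable_linear:
  "linear (f :: 'a::euclidean_space \<Rightarrow> 'b::euclidean_space) \<Longrightarrow> f \<in> borel_measurable borel"
  by (intro borel_measurable_continuous_onI linear_continuous_on) (simp add: linear_conv_bounded_linear)

lemma ball_Basis_basis_index:
  "(\<forall>b\<in>(Basis :: 'a::euclidean_space set). P b) \<longleftrightarrow> (\<forall>i::'a basis_index. P (Rep_basis_index i))"
  by (metis Rep_basis_index Abs_basis_index_inverse)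

lemma distr_lborel_coords: "distr lborel borel (coords :: 'a::euclidean_space \<Rightarrow> _) = lborel"
proof (rule lborel_eqI[symmetric])
  fix l u :: "real ^ 'a basis_index"
  assume lu: "\<And>b. b \<in> Basis \<Longrightarrow> l \<bullet> b \<le> u \<bullet> b"
  have "v \<in> box (of_coords l) (of_coords u) \<longleftrightarrow> coords v \<in> box l u" for v :: 'a
    unfolding mem_box_cart mem_box ball_Basis_basis_index by simp
  then have "coords -` box l u = box (of_coords l) (of_coords u :: 'a)"
    by blast
  then have "emeasure (distr lborel borel coords) (box l u) = emeasure lborel (box (of_coords l) (of_coords u :: 'a))"
    by (subst emeasure_distr) (auto simp: borel_measurable_linear[OF linear_coords])
  also have "\<dots> = (\<Prod>b\<in>Basis. (of_coords u - of_coords l :: 'a) \<bullet> b)"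
  proof (rule emeasure_lborel_box)
    fix b :: 'a assume "b \<in> Basis"
    then have "b = Rep_basis_index (Abs_basis_index b)"
      by (simp add: Abs_basis_index_inverse)
    moreover have "l $ Abs_basis_index b \<le> u $ Abs_basis_index b"
      using lu[of "axis (Abs_basis_index b) 1"] by (simp add: inner_axis)
    ultimately show "of_coords l \<bullet> b \<le> of_coords u \<bullet> b"
      by (metis inner_of_coords_Rep)
  qed
  also have "\<dots> = (\<Prod>b\<in>Basis. (u - l) \<bullet> b)"
    by (simp add: prod_basis_index[where 'a='a, symmetric] prod_Basis_vec inner_diff_left inner_axis)
  finally show "emeasure (distr lborel borel coords) (box l u) = (\<Prod>b\<in>Basis. (u - l) \<bullet> b)" .
qed simp

lemma distr_lborel_of_coords: "distr lborel borel (of_coords :: _ \<Rightarrow> 'a::euclidean_space) = lborel"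
proof -
  have [measurable]: "coords \<in> borel_measurable borel" "of_coords \<in> borel_measurable borel"
    using linear_coords linear_of_coords by (auto intro: borel_measurable_linear)
  have "distr lborel borel (of_coords :: _ \<Rightarrow> 'a) = distr (distr lborel borel (coords :: 'a \<Rightarrow> _)) borel of_coords"
    by (simp add: distr_lborel_coords)
  also have "\<dots> = lborel"
    by (subst distr_distr) (simp_all add: o_def distr_id2)
  finally show ?thesis .
qed

lemma distr_lborel_orthogonal_transformation_cart:
  fixes T :: "real ^ 'n::{finite,wellorder} \<Rightarrow> real ^ 'n::{finite,wellorder}"
  assumes T: "orthogonal_transformation T"
  shows "distr lborel borel T = lborel"
proof (rule lborel_eqI[symmetric])
  fix l u :: "real ^ 'n::{finite,wellorder}"
  assume lu: "\<And>b. b \<in> Basis \<Longrightarrow> l \<bullet> b \<le> u \<bullet> b"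
  have T_meas: "T \<in> borel_measurable borel"
    using T borel_measurable_linear orthogonal_transformation_linear by blast
  have preimage: "T -` box l u = inv T ` box l u"
    using T orthogonal_transformation_bij bij_vimage_eq_inv_image by blast
  have box: "box l u \<in> lmeasurable" by (simp add: lmeasurable_open)
  note inv_T = orthogonal_transformation_inv[OF T]
  have "inv T ` box l u \<in> sets borel"
    using T_meas preimage by (metis measurable_sets_borel open_box borel_open)
  then have "emeasure (distr lborel borel T) (box l u) = emeasure lebesgue (inv T ` box l u)"
    using T_meas preimage by (subst emeasure_distr) auto
  also have "\<dots> = emeasure lebesgue (box l u)"
    using measurable_orthogonal_image[OF inv_T box] measure_orthogonal_image[OF inv_T box] box
    by (simp add: emeasure_eq_measure2)
  also have "\<dots> = (\<Prod>b\<in>Basis. (u - l) \<bullet> b)"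
    using lu by (simp add: emeasure_lborel_box inner_diff_left)
  finally show "emeasure (distr lborel borel T) (box l u) = (\<Prod>b\<in>Basis. (u - l) \<bullet> b)" .
qed simp

lemma distr_lborel_orthogonal_transformation:
  fixes T :: "'a::euclidean_space \<Rightarrow> 'a"
  assumes T: "orthogonal_transformation T"
  shows "distr lborel borel T = lborel"
proof -
  define T' where "T' = coords \<circ> T \<circ> of_coords"
  have "linear T'"
    unfolding T'_def using T linear_coords linear_of_coords
    by (intro linear_compose) (auto simp: orthogonal_transformation_linear)
  moreover have "norm (T' v) = norm v" for v
    using T inner_coords[of "T (of_coords v)"] inner_of_coords[of v v]
    by (simp add: T'_def norm_eq_sqrt_inner orthogonal_transformation_def)
  ultimately have T': "orthogonal_transformation T'"
    by (simp add: orthogonal_transformation)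
  have T_eq: "T = of_coords \<circ> T' \<circ> coords"
    by (simp add: T'_def fun_eq_iff)
  have [measurable]: "T' \<in> borel_measurable borel" "coords \<in> borel_measurable borel"
    "of_coords \<in> borel_measurable borel"
    using \<open>linear T'\<close> linear_coords linear_of_coords by (auto intro: borel_measurable_linear)
  have "distr lborel borel T = distr (distr (distr lborel borel (coords :: 'a \<Rightarrow> _)) borel T') borel of_coords"
    unfolding T_eq by (simp add: distr_distr comp_assoc)
  then show ?thesis
    by (simp add: distr_lborel_coords distr_lborel_orthogonal_transformation_cart[OF T'] distr_lborel_of_coords)
qed


section \<open>The surface measure as a cone measure\<close>

definition orth_part :: "'a::euclidean_space \<Rightarrow> 'a \<Rightarrow> 'a" where
  "orth_part x p = p - (x \<bullet> p) *\<^sub>R x"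

definition cylinder :: "'a::euclidean_space \<Rightarrow> 'a set" where
  "cylinder x = {p. 0 < norm (orth_part x p) \<and> norm (orth_part x p) \<le> 1 \<and> 0 \<le> x \<bullet> p \<and> x \<bullet> p \<le> 1}"

text \<open>For unit \<open>x\<close>, \<^term>\<open>cylinder x\<close> is \<^term>\<open>cone_cyl x (subsphere x)\<close>.\<close>

lemma inner_orth_part: "norm x = 1 \<Longrightarrow> x \<bullet> orth_part x p = 0"
  by (simp add: orth_part_def inner_diff_right norm_eq_1)

lemma orth_part_orthogonal_transformation:
  assumes T: "orthogonal_transformation T" and y: "T x = y"
  shows "orth_part y (T p) = T (orth_part x p)" and "y \<bullet> T p = x \<bullet> p"
proof -
  show yp: "y \<bullet> T p = x \<bullet> p"
    using T y by (auto simp: orthogonal_transformation_def)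
  have "linear T" using T orthogonal_transformation_linear by blast
  then show "orth_part y (T p) = T (orth_part x p)"
    by (simp add: orth_part_def yp y linear_diff linear_scale)
qed

lemma sets_cylinder [measurable]: "cylinder x \<in> sets borel"
  unfolding cylinder_def orth_part_def by measurable

lemma sets_subsphere [measurable]: "subsphere x \<in> sets borel"
  unfolding subsphere_def by measurable

lemma sets_usphere [measurable]: "usphere \<in> sets borel"
  unfolding usphere_def by measurable

lemma borel_measurable_sgn_orth_part [measurable]: "(\<lambda>p. sgn (orth_part x p)) \<in> borel_measurable borel"
  unfolding orth_part_def by measurable

lemma sgn_orth_part_in_subsphere:
  "norm x = 1 \<Longrightarrow> p \<in> cylinder x \<Longrightarrow> sgn (orth_part x p) \<in> subsphere x"
  by (auto simp: subsphere_def cylinder_def inner_orth_part norm_sgn sgn_div_norm)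

lemma cone_cyl_eq_vimage:
  assumes x: "norm x = 1" and B: "B \<subseteq> subsphere x"
  shows "cone_cyl x B = cylinder x \<inter> (\<lambda>p. sgn (orth_part x p)) -` B"
proof (intro equalityI subsetI)
  fix p assume "p \<in> cone_cyl x B"
  then obtain z t s where p: "p = t *\<^sub>R z + s *\<^sub>R x" and "z \<in> B" "0 < t" "t \<le> 1" "0 \<le> s" "s \<le> 1"
    unfolding cone_cyl_def by blast
  moreover have "norm z = 1" "z \<noteq> 0" "x \<bullet> z = 0"
    using \<open>z \<in> B\<close> B by (auto simp: subsphere_def)
  moreover have "x \<bullet> p = s"
    using x \<open>x \<bullet> z = 0\<close> by (simp add: p inner_add_right norm_eq_1)
  ultimately have "orth_part x p = t *\<^sub>R z"
    by (simp add: orth_part_def p)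
  with \<open>x \<bullet> p = s\<close> show "p \<in> cylinder x \<inter> (\<lambda>p. sgn (orth_part x p)) -` B"
    using \<open>z \<in> B\<close> \<open>norm z = 1\<close> \<open>z \<noteq> 0\<close> \<open>0 < t\<close> \<open>t \<le> 1\<close> \<open>0 \<le> s\<close> \<open>s \<le> 1\<close>
    by (simp add: cylinder_def sgn_scaleR sgn_div_norm)
next
  fix p assume p: "p \<in> cylinder x \<inter> (\<lambda>p. sgn (orth_part x p)) -` B"
  then have "orth_part x p \<noteq> 0"
    by (simp add: cylinder_def)
  then have "p = norm (orth_part x p) *\<^sub>R sgn (orth_part x p) + (x \<bullet> p) *\<^sub>R x"
    by (simp add: sgn_div_norm) (simp add: orth_part_def)
  with p show "p \<in> cone_cyl x B"
    unfolding cone_cyl_def cylinder_def by blast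
qed

lemma sub_surface_eq_distr:
  fixes x :: "'a::euclidean_space"
  assumes x: "norm x = 1"
  shows "sub_surface x = distr (density (restrict_space lborel (cylinder x)) (\<lambda>_. of_nat (DIM('a) - 1)))
      (restrict_space borel (subsphere x)) (\<lambda>p. sgn (orth_part x p))"
    (is "_ = distr ?M ?S ?g")
proof -
  have g: "?g \<in> measurable ?M ?S"
    using sgn_orth_part_in_subsphere[OF x] measurable_restrict_space1[OF borel_measurable_sgn_orth_part[folded measurable_lborel2]]
    by (intro measurable_restrict_space2) (auto simp: space_restrict_space)
  have "distr ?M ?S ?g = measure_of (subsphere x) (sets ?S) (emeasure (distr ?M ?S ?g))"
    using measure_of_of_measure[of "distr ?M ?S ?g"] by (simp add: space_restrict_space)
  also have "\<dots> = sub_surface x"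
    unfolding sub_surface_def
  proof (rule measure_of_eq)
    show "sets ?S \<subseteq> Pow (subsphere x)"
      using sets.space_closed[of ?S] by (simp add: space_restrict_space)
    fix B assume "B \<in> sigma_sets (subsphere x) (sets ?S)"
    then have "B \<in> sets ?S"
      using sets.sigma_sets_eq[of ?S] by (simp add: space_restrict_space)
    then have B: "B \<subseteq> subsphere x" "B \<in> sets borel"
      using sets_restrict_space_iff[of "subsphere x" borel B] by auto
    have "emeasure (distr ?M ?S ?g) B = of_nat (DIM('a) - 1) * emeasure lborel (cylinder x \<inter> ?g -` B)"
      using g \<open>B \<in> sets ?S\<close> B
      by (simp add: emeasure_distr emeasure_density_const emeasure_restrict_space space_restrict_space
          sets_restrict_space_iff Int_commute)
    also have "\<dots> = of_nat (DIM('a) - 1) * emeasure lborel (cone_cyl x B)"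
      by (simp add: cone_cyl_eq_vimage[OF x B(1)])
    finally show "emeasure (distr ?M ?S ?g) B = of_nat (DIM('a) - 1) * emeasure lborel (cone_cyl x B)" .
  qed
  finally show ?thesis ..
qed

lemma sets_sub_surface: "norm x = 1 \<Longrightarrow> sets (sub_surface x) = sets (restrict_space borel (subsphere x))"
  by (simp add: sub_surface_eq_distr)

lemma space_sub_surface: "norm x = 1 \<Longrightarrow> space (sub_surface x) = subsphere x"
  by (simp add: sub_surface_eq_distr space_restrict_space)

lemma measurable_sub_surface: "norm x = 1 \<Longrightarrow> f \<in> measurable borel N \<Longrightarrow> f \<in> measurable (sub_surface x) N"
  by (auto simp: sets_sub_surface intro: measurable_restrict_space1 cong: measurable_cong_sets)

lemma nn_integral_sub_surface:
  fixes f :: "'a::euclidean_space \<Rightarrow> ennreal"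
  assumes x: "norm x = 1" and f [measurable]: "f \<in> borel_measurable borel"
  shows "(\<integral>\<^sup>+z. f z \<partial>sub_surface x)
    = of_nat (DIM('a) - 1) * (\<integral>\<^sup>+p. indicator (cylinder x) p * f (sgn (orth_part x p)) \<partial>lborel)"
proof -
  have "(\<integral>\<^sup>+z. f z \<partial>sub_surface x)
      = (\<integral>\<^sup>+p. f (sgn (orth_part x p)) \<partial>density (restrict_space lborel (cylinder x)) (\<lambda>_. of_nat (DIM('a) - 1)))"
    unfolding sub_surface_eq_distr[OF x]
    using sgn_orth_part_in_subsphere[OF x] measurable_restrict_space1[OF borel_measurable_sgn_orth_part[folded measurable_lborel2]]
      measurable_restrict_space1[OF f]
    by (intro nn_integral_distr measurable_restrict_space2) (auto simp: space_restrict_space)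
  also have "\<dots> = (\<integral>\<^sup>+p. of_nat (DIM('a) - 1) * (indicator (cylinder x) p * f (sgn (orth_part x p))) \<partial>lborel)"
    by (simp add: nn_integral_density nn_integral_restrict_space measurable_restrict_space1 mult_ac)
  also have "\<dots> = of_nat (DIM('a) - 1) * (\<integral>\<^sup>+p. indicator (cylinder x) p * f (sgn (orth_part x p)) \<partial>lborel)"
    by (simp add: nn_integral_cmult)
  finally show ?thesis .
qed

lemma cylinder_orthogonal_transformation:
  assumes T: "orthogonal_transformation T" and y: "T x = y"
  shows "T p \<in> cylinder y \<longleftrightarrow> p \<in> cylinder x"
proof -
  have "norm (orth_part y (T p)) = norm (orth_part x p)" "y \<bullet> T p = x \<bullet> p"
    using orth_part_orthogonal_transformation[OF T y] T by (simp_all add: orthogonal_transformation_norm)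
  then show ?thesis
    unfolding cylinder_def mem_Collect_eq by (simp only:)
qed

lemma sgn_orthogonal_transformation: "orthogonal_transformation T \<Longrightarrow> sgn (T v) = T (sgn v)"
  by (simp add: sgn_div_norm orthogonal_transformation_norm orthogonal_transformation_linear linear_cmul)

lemma nn_integral_sub_surface_orthogonal_transformation:
  fixes f :: "'a::euclidean_space \<Rightarrow> ennreal" and x :: 'a
  assumes x: "norm x = 1" and T: "orthogonal_transformation T" and y: "T x = y"
    and f [measurable]: "f \<in> borel_measurable borel"
  shows "(\<integral>\<^sup>+z. f (T z) \<partial>sub_surface x) = (\<integral>\<^sup>+z. f z \<partial>sub_surface y)"
proof -
  have "norm y = 1"
    using x T y orthogonal_transformation_norm by metis
  have [measurable]: "T \<in> borel_measurable borel"
    using T borel_measurable_linear orthogonal_transformation_linear by blast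
  define G where "G p = indicator (cylinder y) p * f (sgn (orth_part y p))" for p
  have [measurable]: "G \<in> borel_measurable borel"
    unfolding G_def by measurable
  have "(\<integral>\<^sup>+z. f (T z) \<partial>sub_surface x) = of_nat (DIM('a) - 1) * (\<integral>\<^sup>+p. G (T p) \<partial>lborel)"
    using cylinder_orthogonal_transformation[OF T y] orth_part_orthogonal_transformation(1)[OF T y]
    by (simp add: nn_integral_sub_surface[OF x] G_def indicator_def sgn_orthogonal_transformation[OF T])
  also have "(\<integral>\<^sup>+p. G (T p) \<partial>lborel) = (\<integral>\<^sup>+p. G p \<partial>distr lborel borel T)"
    by (simp add: nn_integral_distr)
  also have "of_nat (DIM('a) - 1) * \<dots> = (\<integral>\<^sup>+z. f z \<partial>sub_surface y)"
    by (simp add: distr_lborel_orthogonal_transformation[OF T] nn_integral_sub_surface[OF \<open>norm y = 1\<close>] G_def)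
  finally show ?thesis .
qed

lemma unit_orthogonal_exists:
  fixes S :: "'a::euclidean_space set"
  assumes "finite S" "card S < DIM('a)"
  obtains e where "norm e = 1" "\<forall>v\<in>S. v \<bullet> e = 0"
proof -
  have "dim S < DIM('a)"
    using assms dim_le_card'[of S] by linarith
  then obtain v where v: "v \<noteq> 0" "\<And>w. w \<in> span S \<Longrightarrow> orthogonal v w"
    using orthogonal_to_subspace_exists by blast
  then have "\<forall>w\<in>S. w \<bullet> sgn v = 0"
    by (auto simp: span_base orthogonal_def inner_commute sgn_div_norm)
  with v show ?thesis
    by (intro that[of "sgn v"]) (auto simp: norm_sgn)
qed

lemma emeasure_cylinder_pos:
  fixes x :: "'a::euclidean_space"
  assumes x: "norm x = 1" and dim: "2 \<le> DIM('a)"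
  shows "0 < emeasure lborel (cylinder x)"
proof -
  obtain e :: 'a where e: "norm e = 1" "x \<bullet> e = 0"
    using unit_orthogonal_exists[of "{x}"] dim by auto
  define U where "U = {p. 0 < norm (orth_part x p) \<and> norm (orth_part x p) < 1 \<and> 0 < x \<bullet> p \<and> x \<bullet> p < 1}"
  have "open U"
    unfolding U_def orth_part_def by (intro open_Collect_conj open_Collect_less continuous_intros)
  moreover have "(1/2) *\<^sub>R x + (1/2) *\<^sub>R e \<in> U"
    using x e by (auto simp: U_def orth_part_def inner_add_right inner_commute dot_square_norm)
  ultimately have "emeasure lborel U \<noteq> 0"
    using open_not_negligible[of U] negligible_iff_emeasure0[of U] by auto
  moreover have "U \<subseteq> cylinder x"
    by (auto simp: U_def cylinder_def)
  then have "emeasure lborel U \<le> emeasure lborel (cylinder x)"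
    by (intro emeasure_mono) simp_all
  ultimately show ?thesis
    using not_gr_zero order_less_le_trans by blast
qed

lemma cylinder_subset_cball: "norm x = 1 \<Longrightarrow> cylinder x \<subseteq> cball 0 2"
proof
  fix p assume x: "norm x = 1" and "p \<in> cylinder x"
  then have "norm (orth_part x p) \<le> 1" "norm ((x \<bullet> p) *\<^sub>R x) \<le> 1"
    by (auto simp: cylinder_def)
  then have "norm (orth_part x p + (x \<bullet> p) *\<^sub>R x) \<le> 2"
    by (intro norm_triangle_le) linarith
  then show "p \<in> cball 0 2"
    by (simp add: orth_part_def)
qed

lemma emeasure_sub_surface_subsphere:
  fixes x :: "'a::euclidean_space"
  assumes x: "norm x = 1"
  shows "emeasure (sub_surface x) (subsphere x) = of_nat (DIM('a) - 1) * emeasure lborel (cylinder x)"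
  using nn_integral_sub_surface[OF x, of "\<lambda>_. 1"] by (simp add: space_sub_surface[OF x])

lemma emeasure_sub_surface_subsphere_real:
  fixes x :: "'a::euclidean_space"
  assumes x: "norm x = 1" and dim: "2 \<le> DIM('a)"
  obtains c where "emeasure (sub_surface x) (subsphere x) = ennreal c" "0 < c"
proof -
  have "emeasure lborel (cylinder x) \<le> emeasure lborel (cball (0::'a) 2)"
    using cylinder_subset_cball[OF x] by (intro emeasure_mono) simp_all
  then have "emeasure lborel (cylinder x) < \<infinity>"
    using emeasure_lborel_cball_finite[of "0::'a" 2] by order
  then have "emeasure (sub_surface x) (subsphere x) < \<infinity>"
    by (simp add: emeasure_sub_surface_subsphere[OF x] ennreal_mult_less_top of_nat_less_top)
  moreover have "0 < emeasure (sub_surface x) (subsphere x)"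
    using emeasure_cylinder_pos[OF x dim] dim
    by (simp add: emeasure_sub_surface_subsphere[OF x] ennreal_zero_less_mult_iff)
  ultimately show ?thesis
    by (metis ennreal_cases ennreal_less_zero_iff that top.extremum_strict)
qed

section \<open>The kernel as an image measure\<close>

lemma norm_orthonormal_comb:
  fixes x e :: "'a::real_inner"
  assumes "norm x = 1" "norm e = 1" "x \<bullet> e = 0"
  shows "norm (a *\<^sub>R x + b *\<^sub>R e) = sqrt (a\<^sup>2 + b\<^sup>2)"
  using assms
  by (simp add: norm_eq_sqrt_inner inner_add_left inner_add_right inner_commute[of e x] power2_eq_square
      flip: dot_square_norm)

definition great_circle :: "'a::euclidean_space \<Rightarrow> 'a \<times> real \<Rightarrow> 'a" where
  "great_circle x q = cos (snd q) *\<^sub>R x + sin (snd q) *\<^sub>R fst q"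

text \<open>The joint law of the direction and the angle drawn by the sampler started at \<open>x\<close>.\<close>

definition dir_angle :: "'a::euclidean_space \<Rightarrow> ('a \<times> real) measure" where
  "dir_angle x = density (sub_surface x \<Otimes>\<^sub>M lborel)
     (\<lambda>q. indicator {0..2*pi} (snd q) / (ennreal (2*pi) * emeasure (sub_surface x) (subsphere x)))"

lemma borel_measurable_great_circle [measurable]: "great_circle x \<in> borel_measurable borel"
  unfolding great_circle_def borel_prod[symmetric] by measurable

lemma great_circle_in_usphere:
  "norm x = 1 \<Longrightarrow> z \<in> subsphere x \<Longrightarrow> great_circle x (z, w) \<in> usphere"
  by (simp add: great_circle_def usphere_def subsphere_def norm_orthonormal_comb)

lemma measurable_sph_space:
  "f \<in> borel_measurable M \<Longrightarrow> (\<And>q. q \<in> space M \<Longrightarrow> f q \<in> usphere) \<Longrightarrow> f \<in> measurable M sph_space"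
  unfolding sph_space_def by (auto intro: measurable_restrict_space2)

lemma sets_sph_space_iff: "A \<in> sets sph_space \<longleftrightarrow> A \<in> sets borel \<and> A \<subseteq> usphere"
  unfolding sph_space_def using sets_restrict_space_iff[of usphere borel A] by auto

lemma space_sub_surface_lborel: "norm x = 1 \<Longrightarrow> space (sub_surface x \<Otimes>\<^sub>M lborel) = subsphere x \<times> UNIV"
  by (simp add: space_pair_measure space_sub_surface)

lemma measurable_sub_surface_lborel:
  assumes x: "norm x = 1" and f: "f \<in> measurable borel N"
  shows "f \<in> measurable (sub_surface x \<Otimes>\<^sub>M lborel) N"
proof -
  have "fst \<in> measurable (sub_surface x \<Otimes>\<^sub>M lborel) borel"
    using measurable_sub_surface[OF x measurable_ident_sets[OF refl]] by (simp add: measurable_fst'')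
  then have "(\<lambda>q. (fst q, snd q)) \<in> measurable (sub_surface x \<Otimes>\<^sub>M lborel) (borel \<Otimes>\<^sub>M borel)"
    by (intro measurable_Pair) simp_all
  then show ?thesis
    using measurable_comp[OF _ f] by (simp add: o_def borel_prod)
qed

lemma emeasure_distr_eq_nn_integral:
  "f \<in> measurable M N \<Longrightarrow> A \<in> sets N \<Longrightarrow> emeasure (distr M N f) A = (\<integral>\<^sup>+q. indicator A (f q) \<partial>M)"
proof -
  assume f: "f \<in> measurable M N" and A: "A \<in> sets N"
  then have "emeasure (distr M N f) A = (\<integral>\<^sup>+p. indicator A p \<partial>distr M N f)"
    by simp
  also have "\<dots> = (\<integral>\<^sup>+q. indicator A (f q) \<partial>M)"
    using A f by (subst nn_integral_distr) auto
  finally show ?thesis .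
qed

lemma nn_integral_dir_angle:
  fixes g :: "'a::euclidean_space \<times> real \<Rightarrow> ennreal"
  assumes x: "norm x = 1" and g [measurable]: "g \<in> borel_measurable borel"
  shows "(\<integral>\<^sup>+q. g q \<partial>dir_angle x)
    = (\<integral>\<^sup>+z. \<integral>\<^sup>+w. indicator {0..2*pi} w * g (z, w) \<partial>lborel \<partial>sub_surface x)
      / (ennreal (2*pi) * emeasure (sub_surface x) (subsphere x))"
proof -
  let ?D = "ennreal (2*pi) * emeasure (sub_surface x) (subsphere x)"
  have ind [measurable]: "(\<lambda>q::'a \<times> real. indicator {0..2*pi} (snd q) :: ennreal) \<in> borel_measurable borel"
    unfolding borel_prod[symmetric] by measurable
  have "(\<integral>\<^sup>+q. g q \<partial>dir_angle x)
      = (\<integral>\<^sup>+q. (indicator {0..2*pi} (snd q) * g q) * inverse ?D \<partial>(sub_surface x \<Otimes>\<^sub>M lborel))"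
    unfolding dir_angle_def
    by (subst nn_integral_density) (auto intro!: measurable_sub_surface_lborel[OF x]
        simp: divide_ennreal_def mult_ac)
  also have "\<dots> = (\<integral>\<^sup>+q. indicator {0..2*pi} (snd q) * g q \<partial>(sub_surface x \<Otimes>\<^sub>M lborel)) * inverse ?D"
    by (intro nn_integral_multc measurable_sub_surface_lborel[OF x]) measurable
  also have "(\<integral>\<^sup>+q. indicator {0..2*pi} (snd q) * g q \<partial>(sub_surface x \<Otimes>\<^sub>M lborel))
      = (\<integral>\<^sup>+z. \<integral>\<^sup>+w. indicator {0..2*pi} w * g (z, w) \<partial>lborel \<partial>sub_surface x)"
    by (subst sigma_finite_measure.nn_integral_fst[OF sigma_finite_lborel, symmetric])
      (auto intro!: measurable_sub_surface_lborel[OF x])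
  finally show ?thesis
    by (simp add: divide_ennreal_def)
qed

lemma prob_space_dir_angle:
  fixes x :: "'a::euclidean_space"
  assumes x: "norm x = 1" and dim: "2 \<le> DIM('a)"
  shows "prob_space (dir_angle x)"
proof
  obtain c where c: "emeasure (sub_surface x) (subsphere x) = ennreal c" "0 < c"
    using emeasure_sub_surface_subsphere_real[OF x dim] by blast
  have "(\<integral>\<^sup>+q. 1 \<partial>dir_angle x) = (\<integral>\<^sup>+z. ennreal (2*pi) \<partial>sub_surface x) / (ennreal (2*pi) * ennreal c)"
    using nn_integral_dir_angle[OF x, of "\<lambda>_. 1"] c by simp
  also have "\<dots> = 1"
    using c by (simp add: space_sub_surface[OF x] ennreal_mult[symmetric])
  finally show "emeasure (dir_angle x) (space (dir_angle x)) = 1"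
    by simp
qed

lemma measurable_great_circle_dir_angle:
  assumes x: "norm x = 1" and T: "orthogonal_transformation T" and y: "T x = y"
  shows "(\<lambda>q. great_circle y (T (fst q), snd q)) \<in> measurable (dir_angle x) sph_space"
proof (rule measurable_sph_space)
  have [measurable]: "T \<in> borel_measurable borel"
    using T borel_measurable_linear orthogonal_transformation_linear by blast
  have "(\<lambda>q. great_circle y (T (fst q), snd q)) \<in> borel_measurable borel"
    unfolding great_circle_def borel_prod[symmetric] by measurable
  then show "(\<lambda>q. great_circle y (T (fst q), snd q)) \<in> borel_measurable (dir_angle x)"
    using measurable_sub_surface_lborel[OF x] unfolding dir_angle_def
    by (subst measurable_cong_sets[OF sets_density refl])
  have "norm y = 1" "\<And>z. z \<in> subsphere x \<Longrightarrow> T z \<in> subsphere y"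
    using x T y orth_part_orthogonal_transformation(2)[OF T y]
    by (auto simp: subsphere_def orthogonal_transformation_norm)
  then show "great_circle y (T (fst q), snd q) \<in> usphere" if "q \<in> space (dir_angle x)" for q
    using that by (auto simp: dir_angle_def space_sub_surface_lborel[OF x] intro: great_circle_in_usphere)
qed

lemma gss_P_eq_distr:
  fixes x :: "'a::euclidean_space"
  assumes x: "norm x = 1"
  shows "gss_P x = distr (dir_angle x) sph_space (great_circle x)"
proof -
  have gc: "great_circle x \<in> measurable (dir_angle x) sph_space"
    using measurable_great_circle_dir_angle[OF x orthogonal_transformation_id] by (simp add: id_def)
  have "distr (dir_angle x) sph_space (great_circle x)
      = measure_of usphere (sets sph_space) (emeasure (distr (dir_angle x) sph_space (great_circle x)))"
    using measure_of_of_measure[of "distr (dir_angle x) sph_space (great_circle x)"]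
    by (simp add: sph_space_def space_restrict_space)
  also have "\<dots> = gss_P x"
    unfolding gss_P_def
  proof (rule measure_of_eq)
    show "sets sph_space \<subseteq> Pow (usphere :: 'a set)"
      using sets_sph_space_iff by auto
    fix A :: "'a set" assume "A \<in> sigma_sets usphere (sets sph_space)"
    then have A: "A \<in> sets sph_space"
      using sets.sigma_sets_eq[of "sph_space :: 'a measure"] by (simp add: sph_space_def space_restrict_space)
    then have "A \<in> sets borel"
      by (simp add: sets_sph_space_iff)
    then have ind_A: "(\<lambda>q. indicator A (great_circle x q) :: ennreal) \<in> borel_measurable borel"
      by measurable
    have "emeasure (distr (dir_angle x) sph_space (great_circle x)) A
        = (\<integral>\<^sup>+q. indicator A (great_circle x q) \<partial>dir_angle x)"
      by (rule emeasure_distr_eq_nn_integral[OF gc A])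
    also have "\<dots> = gss_kernel x A"
      unfolding nn_integral_dir_angle[OF x ind_A] by (simp add: gss_kernel_def great_circle_def)
    finally show "emeasure (distr (dir_angle x) sph_space (great_circle x)) A = gss_kernel x A" .
  qed
  finally show ?thesis ..
qed

lemma nn_integral_dir_angle_orthogonal_transformation:
  fixes g :: "'a::euclidean_space \<times> real \<Rightarrow> ennreal" and x :: 'a
  assumes x: "norm x = 1" and T: "orthogonal_transformation T" and y: "T x = y"
    and g: "g \<in> borel_measurable borel"
  shows "(\<integral>\<^sup>+q. g (T (fst q), snd q) \<partial>dir_angle x) = (\<integral>\<^sup>+q. g q \<partial>dir_angle y)"
proof -
  have "norm y = 1"
    using x T y orthogonal_transformation_norm by metis
  have [measurable]: "T \<in> borel_measurable borel" "g \<in> borel_measurable (borel \<Otimes>\<^sub>M borel)"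
    using T g borel_measurable_linear orthogonal_transformation_linear by (auto simp: borel_prod)
  have gT: "(\<lambda>q. g (T (fst q), snd q)) \<in> borel_measurable borel"
    unfolding borel_prod[symmetric] by measurable
  have "(\<lambda>q. indicator {0..2*pi} (snd q) * g q) \<in> borel_measurable (borel \<Otimes>\<^sub>M borel)"
    by measurable
  then have "(\<lambda>q. indicator {0..2*pi} (snd q) * g q) \<in> borel_measurable (borel \<Otimes>\<^sub>M lborel)"
    by (simp cong: measurable_cong_sets[OF sets_pair_measure_cong[OF refl sets_lborel] refl])
  from sigma_finite_measure.borel_measurable_nn_integral_fst[OF sigma_finite_lborel this]
  have h: "(\<lambda>z. \<integral>\<^sup>+w. indicator {0..2*pi} w * g (z, w) \<partial>lborel) \<in> borel_measurable borel"
    by simp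
  have "emeasure (sub_surface x) (subsphere x) = emeasure (sub_surface y) (subsphere y)"
    using nn_integral_sub_surface_orthogonal_transformation[OF x T y, of "\<lambda>_. 1"]
    by (simp add: space_sub_surface[OF x] space_sub_surface[OF \<open>norm y = 1\<close>])
  then show ?thesis
    using nn_integral_sub_surface_orthogonal_transformation[OF x T y h]
    by (simp add: nn_integral_dir_angle[OF x gT] nn_integral_dir_angle[OF \<open>norm y = 1\<close> g])
qed

lemma gss_P_eq_distr_orthogonal_transformation:
  fixes x :: "'a::euclidean_space" and T :: "'a \<Rightarrow> 'a"
  assumes x: "norm x = 1" and T: "orthogonal_transformation T" and y: "T x = y"
  shows "gss_P y = distr (dir_angle x) sph_space (\<lambda>q. great_circle y (T (fst q), snd q))"
proof (rule measure_eqI)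
  have "norm y = 1"
    using x T y orthogonal_transformation_norm by metis
  note gss_P_y = gss_P_eq_distr[OF this]
  show "sets (gss_P y) = sets (distr (dir_angle x) sph_space (\<lambda>q. great_circle y (T (fst q), snd q)))"
    by (simp add: gss_P_y)
  fix A assume "A \<in> sets (gss_P y)"
  then have A: "A \<in> sets sph_space"
    by (simp add: gss_P_y)
  then have "(\<lambda>q. indicator A (great_circle y q) :: ennreal) \<in> borel_measurable borel"
    by (intro measurable_compose[OF borel_measurable_great_circle] borel_measurable_indicator)
      (simp add: sets_sph_space_iff)
  from nn_integral_dir_angle_orthogonal_transformation[OF x T y this]
  have "(\<integral>\<^sup>+q. indicator A (great_circle y q) \<partial>dir_angle y)
      = (\<integral>\<^sup>+q. indicator A (great_circle y (T (fst q), snd q)) \<partial>dir_angle x)"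
    by simp
  then show "emeasure (gss_P y) A = emeasure (distr (dir_angle x) sph_space (\<lambda>q. great_circle y (T (fst q), snd q))) A"
    using measurable_great_circle_dir_angle[OF x T y] measurable_great_circle_dir_angle[OF \<open>norm y = 1\<close> orthogonal_transformation_id]
    by (simp add: gss_P_y emeasure_distr_eq_nn_integral[OF _ A] id_def)
qed

section \<open>The rotation coupling\<close>

text \<open>
  \<^term>\<open>plane_map u w a b c d\<close> acts by the matrix \<open>[[a, b], [c, d]]\<close> on the orthonormal pair
  \<open>u, w\<close> and as the identity on its orthogonal complement.
\<close>

definition plane_map :: "'a::real_inner \<Rightarrow> 'a \<Rightarrow> real \<Rightarrow> real \<Rightarrow> real \<Rightarrow> real \<Rightarrow> 'a \<Rightarrow> 'a" where
  "plane_map u w a b c d v = v + ((a - 1) * (u \<bullet> v) + b * (w \<bullet> v)) *\<^sub>R u + (c * (u \<bullet> v) + (d - 1) * (w \<bullet> v)) *\<^sub>R w"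

lemma linear_plane_map: "linear (plane_map u w a b c d)"
  by (rule linearI) (simp_all add: plane_map_def inner_add_right algebra_simps)

lemma orthogonal_transformation_plane_map:
  fixes u w :: "'a::real_inner"
  assumes u: "norm u = 1" and w: "norm w = 1" and uw: "u \<bullet> w = 0"
    and cols: "a\<^sup>2 + c\<^sup>2 = 1" "b\<^sup>2 + d\<^sup>2 = 1" "a * b + c * d = 0"
  shows "orthogonal_transformation (plane_map u w a b c d)"
proof -
  have uu: "u \<bullet> u = 1" and ww: "w \<bullet> w = 1" and wu: "w \<bullet> u = 0"
    using u w uw by (simp_all add: norm_eq_1 inner_commute)
  have expand: "(v + \<alpha> *\<^sub>R u + \<beta> *\<^sub>R w) \<bullet> (v + \<alpha> *\<^sub>R u + \<beta> *\<^sub>R w)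
      = v \<bullet> v + 2 * \<alpha> * (u \<bullet> v) + 2 * \<beta> * (w \<bullet> v) + \<alpha>\<^sup>2 + \<beta>\<^sup>2" for v \<alpha> \<beta>
    by (simp add: inner_add_left inner_add_right uu ww uw wu inner_commute[of v u] inner_commute[of v w] power2_eq_square
        distrib_left)
  have "plane_map u w a b c d v \<bullet> plane_map u w a b c d v = v \<bullet> v" for v
  proof -
    define p q where "p = u \<bullet> v" and "q = w \<bullet> v"
    have "plane_map u w a b c d v \<bullet> plane_map u w a b c d v
        = v \<bullet> v + 2 * ((a - 1) * p + b * q) * p + 2 * (c * p + (d - 1) * q) * q
          + ((a - 1) * p + b * q)\<^sup>2 + (c * p + (d - 1) * q)\<^sup>2"
      unfolding plane_map_def expand p_def q_def by (simp add: mult.assoc)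
    also have "\<dots> = v \<bullet> v"
      using cols by algebra
    finally show ?thesis .
  qed
  then show ?thesis
    using linear_plane_map by (simp add: orthogonal_transformation norm_eq_sqrt_inner)
qed

lemma plane_map_first:
  "norm u = 1 \<Longrightarrow> u \<bullet> w = 0 \<Longrightarrow> plane_map u w a b c d u = a *\<^sub>R u + c *\<^sub>R w"
  by (simp add: plane_map_def norm_eq_1 inner_commute[of w] algebra_simps)

lemma plane_map_fixes:
  "u \<bullet> v = 0 \<Longrightarrow> w \<bullet> v = 0 \<Longrightarrow> plane_map u w a b c d v = v"
  by (simp add: plane_map_def)

lemma inner_plane_map_swap:
  "norm u = 1 \<Longrightarrow> u \<bullet> w = 0 \<Longrightarrow> u \<bullet> plane_map u w 0 1 1 0 v = w \<bullet> v"
  by (simp add: plane_map_def inner_add_right norm_eq_1)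

lemma orthonormal_frame_exists:
  fixes x y :: "'a::euclidean_space"
  assumes x: "norm x = 1" and dim: "2 \<le> DIM('a)"
  obtains e where "norm e = 1" "x \<bullet> e = 0" "y = (x \<bullet> y) *\<^sub>R x + (e \<bullet> y) *\<^sub>R e"
proof (cases "orth_part x y = 0")
  case True
  obtain e where e: "norm e = 1" "x \<bullet> e = 0"
    using unit_orthogonal_exists[of "{x}"] dim by auto
  moreover have "y = (x \<bullet> y) *\<^sub>R x"
    using True by (simp add: orth_part_def)
  moreover from this have "e \<bullet> y = 0"
    using e by (metis inner_commute inner_scaleR_right mult_zero_right)
  ultimately show ?thesis
    using that by auto
next
  case False
  define e where "e = sgn (orth_part x y)"
  have e: "norm e = 1" "x \<bullet> e = 0"
    using False inner_orth_part[OF x] by (simp_all add: e_def norm_sgn sgn_div_norm)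
  have y: "y = (x \<bullet> y) *\<^sub>R x + orth_part x y"
    by (simp add: orth_part_def)
  then have "e \<bullet> y = e \<bullet> orth_part x y"
    using e by (metis add_0 inner_add_right inner_commute inner_scaleR_right mult_zero_right)
  also have "\<dots> = norm (orth_part x y)"
    using False by (simp add: e_def sgn_div_norm dot_square_norm field_simps power2_eq_square)
  finally have "orth_part x y = (e \<bullet> y) *\<^sub>R e"
    using False by (simp add: e_def sgn_div_norm)
  with e y show ?thesis
    using that by auto
qed

lemma inner_sq_add_inner_sq_le:
  fixes e f z :: "'a::real_inner"
  assumes e: "norm e = 1" and f: "norm f = 1" and ef: "e \<bullet> f = 0"
  shows "(e \<bullet> z)\<^sup>2 + (f \<bullet> z)\<^sup>2 \<le> (norm z)\<^sup>2"
proof -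
  have expand: "(norm (z - a *\<^sub>R e - b *\<^sub>R f))\<^sup>2 = (norm z)\<^sup>2 - 2 * a * (e \<bullet> z) - 2 * b * (f \<bullet> z) + a\<^sup>2 + b\<^sup>2"
    for a b
    using e f ef
    by (simp add: inner_diff_left inner_diff_right inner_commute[of z e] inner_commute[of z f]
        inner_commute[of f e] norm_eq_1 algebra_simps power2_eq_square[of a] power2_eq_square[of b]
        flip: dot_square_norm)
  have "0 \<le> (norm (z - (e \<bullet> z) *\<^sub>R e - (f \<bullet> z) *\<^sub>R f))\<^sup>2"
    by simp
  then show ?thesis
    unfolding expand by (simp add: power2_eq_square)
qed

text \<open>
  A reflection fixing \<open>x\<close> swaps \<open>e\<close> with a third orthonormal direction \<open>f\<close> (here \<open>d \<ge> 3\<close>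
  is needed), so \<open>(e \<bullet> z)\<^sup>2\<close> and \<open>(f \<bullet> z)\<^sup>2\<close> have the same integral, and their sum is at most 1.
\<close>

lemma nn_integral_sub_surface_inner_sq_le:
  fixes x e :: "'a::euclidean_space"
  assumes x: "norm x = 1" and e: "norm e = 1" "x \<bullet> e = 0" and dim: "3 \<le> DIM('a)"
  shows "2 * (\<integral>\<^sup>+z. ennreal ((e \<bullet> z)\<^sup>2) \<partial>sub_surface x) \<le> emeasure (sub_surface x) (subsphere x)"
proof -
  obtain f :: 'a where f: "norm f = 1" "x \<bullet> f = 0" "e \<bullet> f = 0"
  proof (rule unit_orthogonal_exists[of "{x, e}"])
    show "card {x, e} < DIM('a)"
      using dim by (cases "x = e") auto
  qed auto
  let ?Q = "plane_map e f 0 1 1 0"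
  have Q: "orthogonal_transformation ?Q"
    using e f by (intro orthogonal_transformation_plane_map) simp_all
  have Qx: "?Q x = x"
    using e(2) f(2) by (intro plane_map_fixes) (simp_all add: inner_commute)
  have sq_meas: "(\<lambda>z. ennreal ((v \<bullet> z)\<^sup>2)) \<in> borel_measurable (sub_surface x)" for v :: 'a
    by (intro measurable_sub_surface[OF x]) measurable
  have "(\<integral>\<^sup>+z. ennreal ((f \<bullet> z)\<^sup>2) \<partial>sub_surface x) = (\<integral>\<^sup>+z. ennreal ((e \<bullet> ?Q z)\<^sup>2) \<partial>sub_surface x)"
    by (simp only: inner_plane_map_swap[OF e(1) f(3)])
  also have "\<dots> = (\<integral>\<^sup>+z. ennreal ((e \<bullet> z)\<^sup>2) \<partial>sub_surface x)"
    by (rule nn_integral_sub_surface_orthogonal_transformation[OF x Q Qx]) measurable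
  finally have "2 * (\<integral>\<^sup>+z. ennreal ((e \<bullet> z)\<^sup>2) \<partial>sub_surface x)
      = (\<integral>\<^sup>+z. ennreal ((e \<bullet> z)\<^sup>2) \<partial>sub_surface x) + (\<integral>\<^sup>+z. ennreal ((f \<bullet> z)\<^sup>2) \<partial>sub_surface x)"
    by (simp only: mult_2)
  also have "\<dots> = (\<integral>\<^sup>+z. ennreal ((e \<bullet> z)\<^sup>2) + ennreal ((f \<bullet> z)\<^sup>2) \<partial>sub_surface x)"
    by (rule nn_integral_add[symmetric]) (rule sq_meas)+
  also have "\<dots> \<le> (\<integral>\<^sup>+z. 1 \<partial>sub_surface x)"
  proof (rule nn_integral_mono)
    fix z assume "z \<in> space (sub_surface x)"
    then have "(e \<bullet> z)\<^sup>2 + (f \<bullet> z)\<^sup>2 \<le> 1"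
      using inner_sq_add_inner_sq_le[OF e(1) f(1) f(3), of z]
      by (simp add: space_sub_surface[OF x] subsphere_def)
    then show "ennreal ((e \<bullet> z)\<^sup>2) + ennreal ((f \<bullet> z)\<^sup>2) \<le> 1"
      by (simp flip: ennreal_plus)
  qed
  finally show ?thesis
    by (simp add: space_sub_surface[OF x])
qed

lemma dist_great_circle_plane_rotation:
  fixes x e z :: "'a::euclidean_space"
  assumes x: "norm x = 1" and e: "norm e = 1" and xe: "x \<bullet> e = 0"
    and y: "y = c *\<^sub>R x + s *\<^sub>R e" and xz: "x \<bullet> z = 0"
  shows "dist (great_circle x (z, w)) (great_circle y (plane_map x e c (-s) s c z, w))
    = dist x y * sqrt ((cos w)\<^sup>2 + (e \<bullet> z)\<^sup>2 * (sin w)\<^sup>2)"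
proof -
  define a where "a = e \<bullet> z"
  have "great_circle x (z, w) - great_circle y (plane_map x e c (-s) s c z, w)
      = (cos w * (1 - c) + sin w * s * a) *\<^sub>R x + (- cos w * s + sin w * (1 - c) * a) *\<^sub>R e"
    using xz by (simp add: great_circle_def plane_map_def y a_def algebra_simps)
  then have "dist (great_circle x (z, w)) (great_circle y (plane_map x e c (-s) s c z, w))
      = sqrt ((cos w * (1 - c) + sin w * s * a)\<^sup>2 + (- cos w * s + sin w * (1 - c) * a)\<^sup>2)"
    by (simp only: dist_norm norm_orthonormal_comb[OF x e xe])
  also have "\<dots> = sqrt ((1 - c)\<^sup>2 + (- s)\<^sup>2) * sqrt ((cos w)\<^sup>2 + a\<^sup>2 * (sin w)\<^sup>2)"
    by (simp add: power2_eq_square algebra_simps flip: real_sqrt_mult)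
  also have "sqrt ((1 - c)\<^sup>2 + (- s)\<^sup>2) = dist x y"
    unfolding dist_norm y norm_orthonormal_comb[OF x e xe, symmetric] by (simp add: algebra_simps)
  finally show ?thesis
    by (simp add: a_def)
qed

lemma sqrt_le_tangent:
  fixes t u :: real
  assumes "0 < t" "0 \<le> u"
  shows "sqrt u \<le> u / (2 * t) + t / 2"
proof -
  have "0 \<le> (sqrt u - t)\<^sup>2"
    by simp
  then have "2 * t * sqrt u \<le> u + t\<^sup>2"
    using assms by (simp add: power2_diff mult_ac)
  then show ?thesis
    using assms by (simp add: field_simps power2_eq_square)
qed

lemma nn_integral_cos_sq_sin_sq:
  fixes a b c :: real
  assumes "0 \<le> a" "0 \<le> b" "0 \<le> c"
  shows "(\<integral>\<^sup>+w. ennreal (indicator {0..2*pi} w * (a * (cos w)\<^sup>2 + b * (sin w)\<^sup>2 + c)) \<partial>lborel)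
    = ennreal (pi * (a + b) + 2 * pi * c)"
proof -
  define h where "h w = a * (cos w)\<^sup>2 + b * (sin w)\<^sup>2 + c" for w
  define H where "H w = a * ((w + sin w * cos w) / 2) + b * ((w - sin w * cos w) / 2) + c * w" for w
  have "(H has_real_derivative h w) (at w)" for w
    unfolding H_def h_def
    by (auto intro!: derivative_eq_intros simp: power2_eq_square field_simps)
      (use sin_cos_squared_add[of w] in algebra)
  then have "(h has_integral H (2*pi) - H 0) {0..2*pi}"
    by (intro fundamental_theorem_of_calculus)
      (auto intro: has_field_derivative_at_within simp flip: has_real_derivative_iff_has_vector_derivative)
  then have "(h has_integral pi * (a + b) + 2 * pi * c) {0..2*pi}"
    by (simp add: H_def algebra_simps)
  then have "((\<lambda>w. indicator {0..2*pi} w * h w) has_integral pi * (a + b) + 2 * pi * c) UNIV"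
    unfolding indicator_times_eq_if has_integral_restrict_UNIV .
  then show ?thesis
    using assms by (subst nn_integral_has_integral_lborel) (auto simp: h_def)
qed

lemma nn_integral_dist_great_circle_le:
  fixes x e z :: "'a::euclidean_space"
  assumes x: "norm x = 1" and e: "norm e = 1" and xe: "x \<bullet> e = 0"
    and y: "y = c *\<^sub>R x + s *\<^sub>R e" and xz: "x \<bullet> z = 0"
  shows "(\<integral>\<^sup>+w. indicator {0..2*pi} w
        * ennreal (dist (great_circle x (z, w)) (great_circle y (plane_map x e c (-s) s c z, w))) \<partial>lborel)
    \<le> ennreal (dist x y * pi * (81/56) + dist x y * pi * (4/7) * (e \<bullet> z)\<^sup>2)"
proof -
  let ?L = "dist x y" and ?a = "e \<bullet> z"
  have "(\<integral>\<^sup>+w. indicator {0..2*pi} w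
        * ennreal (dist (great_circle x (z, w)) (great_circle y (plane_map x e c (-s) s c z, w))) \<partial>lborel)
      \<le> (\<integral>\<^sup>+w. ennreal (indicator {0..2*pi} w
        * (4/7 * ?L * (cos w)\<^sup>2 + 4/7 * ?L * ?a\<^sup>2 * (sin w)\<^sup>2 + 7/16 * ?L)) \<partial>lborel)"
  proof (rule nn_integral_mono)
    fix w
    have "dist (great_circle x (z, w)) (great_circle y (plane_map x e c (-s) s c z, w))
        = ?L * sqrt ((cos w)\<^sup>2 + ?a\<^sup>2 * (sin w)\<^sup>2)"
      by (rule dist_great_circle_plane_rotation[OF x e xe y xz])
    also have "\<dots> \<le> ?L * (((cos w)\<^sup>2 + ?a\<^sup>2 * (sin w)\<^sup>2) / (2 * (7/8)) + (7/8) / 2)"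
      by (intro mult_left_mono sqrt_le_tangent) simp_all
    also have "\<dots> = 4/7 * ?L * (cos w)\<^sup>2 + 4/7 * ?L * ?a\<^sup>2 * (sin w)\<^sup>2 + 7/16 * ?L"
      by (simp add: algebra_simps)
    finally show "indicator {0..2*pi} w
          * ennreal (dist (great_circle x (z, w)) (great_circle y (plane_map x e c (-s) s c z, w)))
        \<le> ennreal (indicator {0..2*pi} w * (4/7 * ?L * (cos w)\<^sup>2 + 4/7 * ?L * ?a\<^sup>2 * (sin w)\<^sup>2 + 7/16 * ?L))"
      by (simp add: indicator_def ennreal_leI del: ennreal_plus)
  qed
  also have "\<dots> = ennreal (pi * (4/7 * ?L + 4/7 * ?L * ?a\<^sup>2) + 2 * pi * (7/16 * ?L))"
    by (rule nn_integral_cos_sq_sin_sq) simp_all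
  also have "pi * (4/7 * ?L + 4/7 * ?L * ?a\<^sup>2) + 2 * pi * (7/16 * ?L) = ?L * pi * (81/56) + ?L * pi * (4/7) * ?a\<^sup>2"
    by (simp add: field_simps)
  finally show ?thesis .
qed

lemma nn_integral_sub_surface_inner_sq_affine_le:
  fixes x e :: "'a::euclidean_space"
  assumes x: "norm x = 1" and e: "norm e = 1" "x \<bullet> e = 0" and dim: "3 \<le> DIM('a)"
    and \<sigma>: "emeasure (sub_surface x) (subsphere x) = ennreal \<sigma>" "0 \<le> \<sigma>" and AB: "0 \<le> A" "0 \<le> B"
  shows "(\<integral>\<^sup>+z. ennreal (A + B * (e \<bullet> z)\<^sup>2) \<partial>sub_surface x) \<le> ennreal ((A + B / 2) * \<sigma>)"
proof -
  define I where "I = (\<integral>\<^sup>+z. ennreal ((e \<bullet> z)\<^sup>2) \<partial>sub_surface x)"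
  have "(\<integral>\<^sup>+z. ennreal (A + B * (e \<bullet> z)\<^sup>2) \<partial>sub_surface x) = ennreal A * ennreal \<sigma> + ennreal (B / 2) * (2 * I)"
    using AB \<sigma> ennreal_mult[of "B / 2" 2]
    by (simp add: ennreal_mult nn_integral_add nn_integral_cmult measurable_sub_surface[OF x]
        space_sub_surface[OF x] I_def mult.assoc)
  also have "\<dots> \<le> ennreal A * ennreal \<sigma> + ennreal (B / 2) * ennreal \<sigma>"
    using nn_integral_sub_surface_inner_sq_le[OF x e dim] \<sigma>
    by (intro add_left_mono mult_left_mono) (simp_all add: I_def)
  also have "\<dots> = ennreal ((A + B / 2) * \<sigma>)"
    using AB \<sigma> by (simp add: ennreal_mult[symmetric] distrib_right)
  finally show ?thesis .
qed

lemma nn_integral_dist_rotation_coupling_le: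
  fixes x y e :: "'a::euclidean_space"
  assumes x: "norm x = 1" and e: "norm e = 1" "x \<bullet> e = 0" and y: "y = c *\<^sub>R x + s *\<^sub>R e"
    and dim: "3 \<le> DIM('a)"
  shows "(\<integral>\<^sup>+q. ennreal (dist (great_circle x q) (great_circle y (plane_map x e c (-s) s c (fst q), snd q)))
      \<partial>dir_angle x) \<le> ennreal (7/8 * dist x y)"
proof -
  let ?R = "plane_map x e c (-s) s c" and ?L = "dist x y"
  obtain \<sigma> where \<sigma>: "emeasure (sub_surface x) (subsphere x) = ennreal \<sigma>" "0 < \<sigma>"
    using emeasure_sub_surface_subsphere_real[OF x, of thesis] dim by simp
  have [measurable]: "?R \<in> borel_measurable borel"
    by (rule borel_measurable_linear[OF linear_plane_map])
  have "(\<lambda>q. ennreal (dist (great_circle x q) (great_circle y (?R (fst q), snd q)))) \<in> borel_measurable borel"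
    unfolding great_circle_def borel_prod[symmetric] by measurable
  then have "(\<integral>\<^sup>+q. ennreal (dist (great_circle x q) (great_circle y (?R (fst q), snd q))) \<partial>dir_angle x)
      = (\<integral>\<^sup>+z. \<integral>\<^sup>+w. indicator {0..2*pi} w * ennreal (dist (great_circle x (z, w)) (great_circle y (?R z, w)))
          \<partial>lborel \<partial>sub_surface x) / (ennreal (2*pi) * ennreal \<sigma>)"
    by (simp add: nn_integral_dir_angle[OF x] \<sigma>)
  also have "\<dots> \<le> (\<integral>\<^sup>+z. ennreal (?L * pi * (81/56) + ?L * pi * (4/7) * (e \<bullet> z)\<^sup>2) \<partial>sub_surface x)
      / (ennreal (2*pi) * ennreal \<sigma>)"
    by (intro divide_right_mono_ennreal nn_integral_mono nn_integral_dist_great_circle_le[OF x e y])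
      (simp add: space_sub_surface[OF x] subsphere_def)
  also have "\<dots> \<le> ennreal ((?L * pi * (81/56) + ?L * pi * (4/7) / 2) * \<sigma>) / (ennreal (2*pi) * ennreal \<sigma>)"
    by (intro divide_right_mono_ennreal nn_integral_sub_surface_inner_sq_affine_le[OF x e dim \<sigma>(1)]) (simp_all add: less_imp_le \<sigma>(2))
  also have "\<dots> = ennreal (97/112 * ?L)"
    using \<sigma>(2) by (simp add: divide_ennreal ennreal_mult[symmetric])
  also have "\<dots> \<le> ennreal (7/8 * ?L)"
    by (intro ennreal_leI) simp
  finally show ?thesis .
qed

lemma borel_measurable_dist_sph_space:
  "(\<lambda>p. ennreal (dist (fst p) (snd p))) \<in> borel_measurable (sph_space \<Otimes>\<^sub>M sph_space)"
proof -
  have "(\<lambda>p. p) \<in> measurable sph_space borel"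
    unfolding sph_space_def by (rule measurable_restrict_space1) simp
  then have [measurable]: "fst \<in> measurable (sph_space \<Otimes>\<^sub>M sph_space) borel"
    "snd \<in> measurable (sph_space \<Otimes>\<^sub>M sph_space) borel"
    using measurable_comp[OF measurable_fst] measurable_comp[OF measurable_snd] by (auto simp: o_def)
  show ?thesis
    by measurable
qed

lemma coupling_gss_P_orthogonal_transformation:
  fixes x :: "'a::euclidean_space" and R :: "'a \<Rightarrow> 'a"
  assumes x: "norm x = 1" and R: "orthogonal_transformation R" and Rx: "R x = y" and dim: "2 \<le> DIM('a)"
  defines "H \<equiv> \<lambda>q. (great_circle x q, great_circle y (R (fst q), snd q))"
  shows "H \<in> measurable (dir_angle x) (sph_space \<Otimes>\<^sub>M sph_space)"
    and "coupling (gss_P x) (gss_P y) (distr (dir_angle x) (sph_space \<Otimes>\<^sub>M sph_space) H)"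
proof -
  show H: "H \<in> measurable (dir_angle x) (sph_space \<Otimes>\<^sub>M sph_space)"
    using measurable_great_circle_dir_angle[OF x orthogonal_transformation_id refl]
      measurable_great_circle_dir_angle[OF x R Rx]
    unfolding H_def by (simp add: id_def)
  show "coupling (gss_P x) (gss_P y) (distr (dir_angle x) (sph_space \<Otimes>\<^sub>M sph_space) H)"
    unfolding coupling_def distr_distr[OF measurable_fst H] distr_distr[OF measurable_snd H]
    using prob_space.prob_space_distr[OF prob_space_dir_angle[OF x dim] H]
    by (simp add: comp_def H_def gss_P_eq_distr[OF x] gss_P_eq_distr_orthogonal_transformation[OF x R Rx])
qed

lemma wasserstein1_gss_P_le:
  fixes x y :: "'a::euclidean_space"
  assumes x: "norm x = 1" and y: "norm y = 1" and dim: "3 \<le> DIM('a)"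
  shows "wasserstein1 (gss_P x) (gss_P y) \<le> ennreal (7/8 * dist x y)"
proof -
  obtain e where e: "norm e = 1" "x \<bullet> e = 0" and y_eq: "y = (x \<bullet> y) *\<^sub>R x + (e \<bullet> y) *\<^sub>R e"
    using orthonormal_frame_exists[OF x, of y thesis] dim by simp
  define c s where "c = x \<bullet> y" and "s = e \<bullet> y"
  have "norm y = sqrt (c\<^sup>2 + s\<^sup>2)"
    by (subst y_eq) (simp add: c_def s_def norm_orthonormal_comb[OF x e])
  then have cs: "c\<^sup>2 + s\<^sup>2 = 1"
    using y by simp
  define R where "R = plane_map x e c (-s) s c"
  have R: "orthogonal_transformation R"
    unfolding R_def using x e cs by (intro orthogonal_transformation_plane_map) (simp_all add: add.commute)
  have Rx: "R x = y"
    unfolding R_def plane_map_first[OF x e(2)] c_def s_def by (rule y_eq[symmetric])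
  define H where "H q = (great_circle x q, great_circle y (R (fst q), snd q))" for q
  have H: "H \<in> measurable (dir_angle x) (sph_space \<Otimes>\<^sub>M sph_space)"
    and coupling: "coupling (gss_P x) (gss_P y) (distr (dir_angle x) (sph_space \<Otimes>\<^sub>M sph_space) H)"
    using coupling_gss_P_orthogonal_transformation[OF x R Rx] dim by (simp_all add: H_def[abs_def])
  have dist_meas: "(\<lambda>p. ennreal (dist (fst p) (snd p))) \<in> borel_measurable (distr (dir_angle x) (sph_space \<Otimes>\<^sub>M sph_space) H)"
    by (simp only: measurable_distr_eq1 borel_measurable_dist_sph_space)
  have "wasserstein1 (gss_P x) (gss_P y)
      \<le> (\<integral>\<^sup>+p. ennreal (dist (fst p) (snd p)) \<partial>distr (dir_angle x) (sph_space \<Otimes>\<^sub>M sph_space) H)"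
    unfolding wasserstein1_def using coupling by (intro INF_lower) simp
  also have "\<dots> = (\<integral>\<^sup>+q. ennreal (dist (great_circle x q) (great_circle y (R (fst q), snd q))) \<partial>dir_angle x)"
    unfolding nn_integral_distr[OF H dist_meas] by (simp only: H_def fst_conv snd_conv)
  also have "\<dots> \<le> ennreal (7/8 * dist x y)"
    unfolding R_def by (rule nn_integral_dist_rotation_coupling_le[OF x e _ dim]) (unfold c_def s_def, fact y_eq)
  finally show ?thesis .
qed

theorem corollary3:
  assumes "DIM('a::euclidean_space) \<ge> 3"
  shows "Dob (gss_P :: 'a \<Rightarrow> 'a measure) \<le> ennreal (7/8)"
  unfolding Dob_def
proof (rule SUP_least, clarify)
  fix x y :: 'a
  assume "x \<in> usphere" "y \<in> usphere" "x \<noteq> y"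
  then have x: "norm x = 1" and y: "norm y = 1" and "0 < dist x y"
    by (simp_all add: usphere_def)
  have "wasserstein1 (gss_P x) (gss_P y) / ennreal (dist x y) \<le> ennreal (7/8 * dist x y) / ennreal (dist x y)"
    by (rule divide_right_mono_ennreal[OF wasserstein1_gss_P_le[OF x y assms]])
  also have "\<dots> = ennreal (7/8)"
    using \<open>0 < dist x y\<close> by (simp add: divide_ennreal)
  finally show "wasserstein1 (gss_P (fst (x, y))) (gss_P (snd (x, y))) / ennreal (dist (fst (x, y)) (snd (x, y)))
      \<le> ennreal (7/8)"
    by simp
qed

end
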